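(* Fix $P_{\max}>0$. For thresholds $(Q,P_{\rm avg})$ let (P2)$_{Q,P_{\rm avg}}$ denote problem (P2). Let $(Q_x,\bar P_x)$, $(Q_y,\bar P_y)$ be threshold pairs and suppose $(P^*_x,\rho^*_x)$ and $(P^*_y,\rho^*_y)$ are optimal policy pairs for (P2)$_{Q_x,\bar P_x}$ and (P2)$_{Q_y,\bar P_y}$. Then for every $\theta\in[0,1]$ there is a policy pair $(P_z,\rho_z)$ with $0\le P_{z,\nu}\le P_{\max}$, $0\le\rho_{z,\nu}\le1$, such that $\mathbb{E}[Q^{\rm NL}_\nu(P_{z,\nu},\rho_{z,\nu})]\ge\theta Q_x+(1-\theta)Q_y$, $\mathbb{E}[P_{z,\nu}]\le\theta\bar P_x+(1-\theta)\bar P_y$, and $\mathbb{E}[R_\nu(P_{z,\nu},\rho_{z,\nu})]\ge\theta\,\mathbb{E}[R_\nu(P^*_{x,\nu},\rho^*_{x,\nu})]+(1-\theta)\,\mathbb{E}[R_\nu(P^*_{y,\nu},\rho^*_{y,\nu})]$. (That is, (P2) satisfies the time-sharing condition.)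
   Context: Standing model: constants $a,b,P_s,T,\sigma^2>0$ are fixed and $\Omega=1/(1+e^{ab})$. Fading is modeled on a probability space carrying independent random variables $h$ (channel power gain, values in $(0,\infty)$, $\mathbb{E}[h]<\infty$) and $U$ (uniform on $[0,1]$). A fading state is $\nu=(h_\nu,U_\nu)$, distributed as $(h,U)$; $\mathbb{E}$ is expectation over the fading state. A policy is a Borel measurable function of the fading state. For a fading state with gain $h_\nu$, transmit power $p\ge0$ and power-splitting ratio $\rho\in[0,1]$: $R_\nu(p,\rho)=\ln\big(1+(1-\rho)h_\nu p/\sigma^2\big)$ (rate, in nats); $\Psi_\nu(p,\rho)=1/(1+e^{-a(\rho h_\nu p-b)})$; $Q^{\rm NL}_\nu(p,\rho)=P_sT(\Psi_\nu(p,\rho)-\Omega)/(1-\Omega)$ (harvested energy). Problem (P2) (short-term power limit $P_{\max}$, average power limit $P_{\rm avg}$, energy threshold $Q$): maximize $\mathbb{E}[R_\nu(P_\nu,\rho_\nu)]$ over pairs of policies $(P_\nu,\rho_\nu)$ with $0\le P_\nu\le P_{\max}$, $0\le\rho_\nu\le1$, subject to $\mathbb{E}[Q^{\rm NL}_\nu(P_\nu,\rho_\nu)]\ge Q$ and $\mathbb{E}[P_\nu]\le P_{\rm avg}$. *)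

theory Defs
  imports "HOL-Probability.Probability"
begin

text \<open>Fading state nu = (h, U). The law of the fading state is the product of the
law H of the channel gain h and the uniform law on [0,1] (h and U independent).\<close>

definition fading :: "real measure \<Rightarrow> (real \<times> real) measure" where
  "fading H = H \<Otimes>\<^sub>M uniform_measure lborel {0..1::real}"

definition Omega :: "real \<Rightarrow> real \<Rightarrow> real" where
  "Omega a b = 1 / (1 + exp (a * b))"

definition rate :: "real \<Rightarrow> real \<times> real \<Rightarrow> real \<Rightarrow> real \<Rightarrow> real" where
  "rate sigma2 nu p rho = ln (1 + (1 - rho) * fst nu * p / sigma2)"

definition Psi :: "real \<Rightarrow> real \<Rightarrow> real \<times> real \<Rightarrow> real \<Rightarrow> real \<Rightarrow> real" where
  "Psi a b nu p rho = 1 / (1 + exp (- a * (rho * fst nu * p - b)))"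

definition QNL :: "real \<Rightarrow> real \<Rightarrow> real \<Rightarrow> real \<Rightarrow> real \<times> real \<Rightarrow> real \<Rightarrow> real \<Rightarrow> real" where
  "QNL a b Ps T nu p rho = Ps * T * (Psi a b nu p rho - Omega a b) / (1 - Omega a b)"

definition admissible ::
  "real measure \<Rightarrow> real \<Rightarrow> (real \<times> real \<Rightarrow> real) \<Rightarrow> (real \<times> real \<Rightarrow> real) \<Rightarrow> bool" where
  "admissible H Pmax P rho \<longleftrightarrow>
     P \<in> borel_measurable (fading H) \<and> rho \<in> borel_measurable (fading H) \<and>
     (\<forall>nu. 0 \<le> P nu \<and> P nu \<le> Pmax) \<and> (\<forall>nu. 0 \<le> rho nu \<and> rho nu \<le> 1)"

definition avg_rate where
  "avg_rate sigma2 H P rho = (\<integral>nu. rate sigma2 nu (P nu) (rho nu) \<partial>fading H)"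

definition avg_energy where
  "avg_energy a b Ps T H P rho = (\<integral>nu. QNL a b Ps T nu (P nu) (rho nu) \<partial>fading H)"

definition avg_power where
  "avg_power H P = (\<integral>nu. P nu \<partial>fading H)"

definition feasibleP2 where
  "feasibleP2 a b Ps T H Pmax Q Pavg P rho \<longleftrightarrow>
     admissible H Pmax P rho \<and> avg_energy a b Ps T H P rho \<ge> Q \<and> avg_power H P \<le> Pavg"

definition optimalP2 where
  "optimalP2 a b Ps T sigma2 H Pmax Q Pavg P rho \<longleftrightarrow>
     feasibleP2 a b Ps T H Pmax Q Pavg P rho \<and>
     (\<forall>P' rho'. feasibleP2 a b Ps T H Pmax Q Pavg P' rho' \<longrightarrow>
        avg_rate sigma2 H P' rho' \<le> avg_rate sigma2 H P rho)"

end

theory Submission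
  imports Defs
begin

text \<open>Time sharing is realised through the auxiliary uniform variable U of the fading state:
follow the first policy while U < \<theta> and the second one otherwise, feeding them the rescaled
variables U/\<theta> and (U - \<theta>)/(1 - \<theta>), which are again uniform on [0,1] and independent of h.
Every average over the fading state is then exactly the \<theta>-convex combination of the averages
of the two policies, so the time-shared pair meets the combined constraints and attains the
combined rate.\<close>

abbreviation unit_uniform :: "real measure" where
  "unit_uniform \<equiv> uniform_measure lborel {0..1}"

lemma prob_space_unit_uniform: "prob_space unit_uniform"
  by (rule prob_space_uniform_measure) auto

lemma nn_integral_unit_uniform:
  fixes f :: "real \<Rightarrow> ennreal"
  assumes [measurable]: "f \<in> borel_measurable borel"
  shows "(\<integral>\<^sup>+u. f u \<partial>unit_uniform) = (\<integral>\<^sup>+u. f u * indicator {0..<1} u \<partial>lborel)"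
proof -
  have "(\<integral>\<^sup>+u. f u \<partial>unit_uniform) = (\<integral>\<^sup>+u. f u * indicator {0..1} u \<partial>lborel)"
    using mult_divide_eq_ennreal[of 1] by (simp add: nn_integral_uniform_measure)
  also have "\<dots> = (\<integral>\<^sup>+u. f u * indicator {0..<1} u \<partial>lborel)"
    by (intro nn_integral_cong_AE eventually_mono[OF AE_lborel_singleton[of 1]])
       (auto simp: indicator_def)
  finally show ?thesis .
qed

lemma nn_integral_lborel_affine_Ico:
  fixes G :: "real \<Rightarrow> ennreal" and c d :: real
  assumes [measurable]: "G \<in> borel_measurable borel" and c: "0 < c"
  shows "(\<integral>\<^sup>+u. G ((u - d) / c) * indicator {d..<d + c} u \<partial>lborel)
    = c * (\<integral>\<^sup>+u. G u * indicator {0..<1} u \<partial>lborel)"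
proof -
  have "(\<integral>\<^sup>+u. G ((u - d) / c) * indicator {d..<d + c} u \<partial>lborel)
      = c * (\<integral>\<^sup>+x. G ((d + c * x - d) / c) * indicator {d..<d + c} (d + c * x) \<partial>lborel)"
    using nn_integral_real_affine[of "\<lambda>u. G ((u - d) / c) * indicator {d..<d + c} u" c d] c
    by simp
  also have "(\<integral>\<^sup>+x. G ((d + c * x - d) / c) * indicator {d..<d + c} (d + c * x) \<partial>lborel)
      = (\<integral>\<^sup>+x. G x * indicator {0..<1} x \<partial>lborel)"
    using c by (intro nn_integral_cong) (simp add: indicator_def zero_le_mult_iff)
  finally show ?thesis .
qed

lemma nn_integral_unit_uniform_split:
  fixes G1 G2 :: "real \<Rightarrow> ennreal" and \<theta> :: real
  assumes \<theta>: "0 < \<theta>" "\<theta> < 1"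
    and [measurable]: "G1 \<in> borel_measurable borel" "G2 \<in> borel_measurable borel"
  shows "(\<integral>\<^sup>+u. (if u < \<theta> then G1 (u / \<theta>) else G2 ((u - \<theta>) / (1 - \<theta>))) \<partial>unit_uniform)
    = ennreal \<theta> * (\<integral>\<^sup>+u. G1 u \<partial>unit_uniform) + ennreal (1 - \<theta>) * (\<integral>\<^sup>+u. G2 u \<partial>unit_uniform)"
proof -
  have "(\<integral>\<^sup>+u. (if u < \<theta> then G1 (u / \<theta>) else G2 ((u - \<theta>) / (1 - \<theta>))) \<partial>unit_uniform)
      = (\<integral>\<^sup>+u. G1 ((u - 0) / \<theta>) * indicator {0..<0 + \<theta>} u
               + G2 ((u - \<theta>) / (1 - \<theta>)) * indicator {\<theta>..<\<theta> + (1 - \<theta>)} u \<partial>lborel)"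
    using \<theta> by (subst nn_integral_unit_uniform) (auto intro!: nn_integral_cong simp: indicator_def)
  also have "\<dots> = ennreal \<theta> * (\<integral>\<^sup>+u. G1 u * indicator {0..<1} u \<partial>lborel)
                 + ennreal (1 - \<theta>) * (\<integral>\<^sup>+u. G2 u * indicator {0..<1} u \<partial>lborel)"
    using \<theta> nn_integral_lborel_affine_Ico[of G1 \<theta> 0] nn_integral_lborel_affine_Ico[of G2 "1 - \<theta>" \<theta>]
    by (simp add: nn_integral_add)
  finally show ?thesis
    by (simp add: nn_integral_unit_uniform)
qed

lemma measurable_fading_iff:
  assumes "sets H = sets borel"
  shows "f \<in> measurable (fading H) N \<longleftrightarrow> f \<in> measurable (borel \<Otimes>\<^sub>M borel) N"
proof -
  have "sets (fading H) = sets (borel \<Otimes>\<^sub>M (borel :: real measure))"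
    unfolding fading_def using assms by (intro sets_pair_measure_cong) auto
  then show ?thesis
    using measurable_cong_sets[OF _ refl] by blast
qed

definition time_share ::
  "real \<Rightarrow> (real \<times> real \<Rightarrow> 'a) \<Rightarrow> (real \<times> real \<Rightarrow> 'a) \<Rightarrow> real \<times> real \<Rightarrow> 'a" where
  "time_share \<theta> f g \<nu> =
     (if snd \<nu> < \<theta> then f (fst \<nu>, snd \<nu> / \<theta>) else g (fst \<nu>, (snd \<nu> - \<theta>) / (1 - \<theta>)))"

lemma measurable_time_share [measurable]:
  assumes [measurable]: "f \<in> borel_measurable (borel \<Otimes>\<^sub>M borel)" "g \<in> borel_measurable (borel \<Otimes>\<^sub>M borel)"
  shows "time_share \<theta> f g \<in> borel_measurable (borel \<Otimes>\<^sub>M borel)"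
  unfolding time_share_def by measurable

lemma comp_time_share: "\<phi> (time_share \<theta> f g \<nu>) = time_share \<theta> (\<lambda>\<nu>. \<phi> (f \<nu>)) (\<lambda>\<nu>. \<phi> (g \<nu>)) \<nu>"
  by (simp add: time_share_def)

lemma nn_integral_time_share:
  fixes f g :: "real \<times> real \<Rightarrow> ennreal"
  assumes \<theta>: "0 < \<theta>" "\<theta> < 1" and H: "sets H = sets borel"
    and [measurable]: "f \<in> borel_measurable (borel \<Otimes>\<^sub>M borel)" "g \<in> borel_measurable (borel \<Otimes>\<^sub>M borel)"
  shows "(\<integral>\<^sup>+\<nu>. time_share \<theta> f g \<nu> \<partial>fading H)
    = ennreal \<theta> * (\<integral>\<^sup>+\<nu>. f \<nu> \<partial>fading H) + ennreal (1 - \<theta>) * (\<integral>\<^sup>+\<nu>. g \<nu> \<partial>fading H)"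
proof -
  interpret U: prob_space unit_uniform
    by (rule prob_space_unit_uniform)
  have meas: "F \<in> borel_measurable (H \<Otimes>\<^sub>M unit_uniform)"
    if "F \<in> borel_measurable (borel \<Otimes>\<^sub>M borel)" for F :: "real \<times> real \<Rightarrow> ennreal"
    using that measurable_fading_iff[OF H] unfolding fading_def by blast
  have Tonelli: "(\<integral>\<^sup>+\<nu>. F \<nu> \<partial>fading H) = (\<integral>\<^sup>+h. \<integral>\<^sup>+u. F (h, u) \<partial>unit_uniform \<partial>H)"
    if "F \<in> borel_measurable (borel \<Otimes>\<^sub>M borel)" for F :: "real \<times> real \<Rightarrow> ennreal"
    unfolding fading_def by (rule U.nn_integral_fst[OF meas[OF that], symmetric])
  have "(\<integral>\<^sup>+\<nu>. time_share \<theta> f g \<nu> \<partial>fading H)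
      = (\<integral>\<^sup>+h. ennreal \<theta> * (\<integral>\<^sup>+u. f (h, u) \<partial>unit_uniform) + ennreal (1 - \<theta>) * (\<integral>\<^sup>+u. g (h, u) \<partial>unit_uniform) \<partial>H)"
    unfolding Tonelli[OF measurable_time_share[OF assms(4,5)]]
  proof (rule nn_integral_cong)
    fix h :: real
    show "(\<integral>\<^sup>+u. time_share \<theta> f g (h, u) \<partial>unit_uniform)
      = ennreal \<theta> * (\<integral>\<^sup>+u. f (h, u) \<partial>unit_uniform) + ennreal (1 - \<theta>) * (\<integral>\<^sup>+u. g (h, u) \<partial>unit_uniform)"
      unfolding time_share_def fst_conv snd_conv
      by (rule nn_integral_unit_uniform_split[OF \<theta>]) measurable
  qed
  also have "\<dots> = ennreal \<theta> * (\<integral>\<^sup>+h. \<integral>\<^sup>+u. f (h, u) \<partial>unit_uniform \<partial>H)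
                 + ennreal (1 - \<theta>) * (\<integral>\<^sup>+h. \<integral>\<^sup>+u. g (h, u) \<partial>unit_uniform \<partial>H)"
    using U.borel_measurable_nn_integral_fst[OF meas] H
    by (simp add: nn_integral_add nn_integral_cmult)
  finally show ?thesis
    unfolding Tonelli[OF assms(4)] Tonelli[OF assms(5)] .
qed

lemma enn2real_convex_combination:
  assumes "x \<noteq> \<top>" "y \<noteq> \<top>" "0 \<le> t" "t \<le> 1"
  shows "enn2real (ennreal t * x + ennreal (1 - t) * y) = t * enn2real x + (1 - t) * enn2real y"
  using assms by (simp add: enn2real_plus enn2real_mult ennreal_mult_less_top top.not_eq_extremum)

lemma integral_time_share:
  fixes f g :: "real \<times> real \<Rightarrow> real"
  assumes \<theta>: "0 < \<theta>" "\<theta> < 1" and H: "sets H = sets borel"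
    and f: "integrable (fading H) f" and g: "integrable (fading H) g"
  shows "(\<integral>\<nu>. time_share \<theta> f g \<nu> \<partial>fading H)
      = \<theta> * (\<integral>\<nu>. f \<nu> \<partial>fading H) + (1 - \<theta>) * (\<integral>\<nu>. g \<nu> \<partial>fading H)"
proof -
  have [measurable]: "f \<in> borel_measurable (borel \<Otimes>\<^sub>M borel)" "g \<in> borel_measurable (borel \<Otimes>\<^sub>M borel)"
    using f g measurable_fading_iff[OF H] by auto
  have nn: "(\<integral>\<^sup>+\<nu>. \<phi> (time_share \<theta> f g \<nu>) \<partial>fading H)
      = ennreal \<theta> * (\<integral>\<^sup>+\<nu>. \<phi> (f \<nu>) \<partial>fading H) + ennreal (1 - \<theta>) * (\<integral>\<^sup>+\<nu>. \<phi> (g \<nu>) \<partial>fading H)"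
    if [measurable]: "\<phi> \<in> borel_measurable borel" for \<phi> :: "real \<Rightarrow> ennreal"
    unfolding comp_time_share[of \<phi>] by (rule nn_integral_time_share[OF \<theta> H]) measurable
  have int: "integrable (fading H) (time_share \<theta> f g)"
  proof (rule integrableI_bounded)
    show "time_share \<theta> f g \<in> borel_measurable (fading H)"
      unfolding measurable_fading_iff[OF H] by measurable
    show "(\<integral>\<^sup>+\<nu>. ennreal (norm (time_share \<theta> f g \<nu>)) \<partial>fading H) < \<infinity>"
      using f g nn[of "\<lambda>x. ennreal (norm x)"]
      by (simp add: integrable_iff_bounded ennreal_mult_less_top)
  qed
  have pos: "(\<integral>\<^sup>+\<nu>. ennreal (time_share \<theta> f g \<nu>) \<partial>fading H)
      = ennreal \<theta> * (\<integral>\<^sup>+\<nu>. ennreal (f \<nu>) \<partial>fading H) + ennreal (1 - \<theta>) * (\<integral>\<^sup>+\<nu>. ennreal (g \<nu>) \<partial>fading H)"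
    by (rule nn) measurable
  have neg: "(\<integral>\<^sup>+\<nu>. ennreal (- time_share \<theta> f g \<nu>) \<partial>fading H)
      = ennreal \<theta> * (\<integral>\<^sup>+\<nu>. ennreal (- f \<nu>) \<partial>fading H) + ennreal (1 - \<theta>) * (\<integral>\<^sup>+\<nu>. ennreal (- g \<nu>) \<partial>fading H)"
    by (rule nn) measurable
  show ?thesis
    unfolding real_lebesgue_integral_def[OF int] real_lebesgue_integral_def[OF f]
      real_lebesgue_integral_def[OF g] pos neg
    using integrableD(2,3)[OF f] integrableD(2,3)[OF g] \<theta>
    by (simp add: enn2real_convex_combination algebra_simps)
qed

lemma rate_time_share:
  "rate \<sigma>2 \<nu> (time_share \<theta> P1 P2 \<nu>) (time_share \<theta> \<rho>1 \<rho>2 \<nu>)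
    = time_share \<theta> (\<lambda>\<nu>. rate \<sigma>2 \<nu> (P1 \<nu>) (\<rho>1 \<nu>)) (\<lambda>\<nu>. rate \<sigma>2 \<nu> (P2 \<nu>) (\<rho>2 \<nu>)) \<nu>"
  by (simp add: time_share_def rate_def)

lemma QNL_time_share:
  "QNL a b Ps T \<nu> (time_share \<theta> P1 P2 \<nu>) (time_share \<theta> \<rho>1 \<rho>2 \<nu>)
    = time_share \<theta> (\<lambda>\<nu>. QNL a b Ps T \<nu> (P1 \<nu>) (\<rho>1 \<nu>)) (\<lambda>\<nu>. QNL a b Ps T \<nu> (P2 \<nu>) (\<rho>2 \<nu>)) \<nu>"
  by (simp add: time_share_def QNL_def Psi_def)

lemma abs_QNL_le: "\<bar>QNL a b Ps T \<nu> p \<rho>\<bar> \<le> \<bar>Ps * T\<bar> / (1 - Omega a b)"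
proof -
  have \<Omega>: "0 < Omega a b" "Omega a b < 1"
    unfolding Omega_def by (auto simp: add_pos_pos)
  have "0 < Psi a b \<nu> p \<rho>" "Psi a b \<nu> p \<rho> < 1"
    unfolding Psi_def by (auto simp: add_pos_pos)
  then have "\<bar>Psi a b \<nu> p \<rho> - Omega a b\<bar> \<le> 1"
    using \<Omega> by auto
  then show ?thesis
    unfolding QNL_def using \<Omega> by (simp add: abs_mult divide_right_mono mult_left_le)
qed

lemma abs_rate_le:
  assumes "0 < fst \<nu>" "0 < \<sigma>2" "0 \<le> p" "p \<le> Pmax" "0 \<le> \<rho>" "\<rho> \<le> 1"
  shows "\<bar>rate \<sigma>2 \<nu> p \<rho>\<bar> \<le> fst \<nu> * Pmax / \<sigma>2"
proof -
  define y where "y = (1 - \<rho>) * fst \<nu> * p / \<sigma>2"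
  have "0 \<le> y"
    using assms unfolding y_def by simp
  moreover have "y \<le> fst \<nu> * Pmax / \<sigma>2"
    using assms unfolding y_def
    by (intro divide_right_mono) (auto simp: mult.commute mult_left_le_one_le mult_mono)
  ultimately show ?thesis
    using ln_add_one_self_le_self[of y] unfolding rate_def y_def[symmetric] by simp
qed

lemma distr_fading_fst: "distr (fading H) H fst = H"
  unfolding fading_def by (rule prob_space.distr_pair_fst[OF prob_space_unit_uniform])

lemma measurable_fading_fst: "fst \<in> measurable (fading H) H"
  unfolding fading_def by (rule measurable_fst)

lemma integrable_fading_fst:
  fixes f :: "real \<Rightarrow> real"
  assumes "integrable H f"
  shows "integrable (fading H) (\<lambda>\<nu>. f (fst \<nu>))"
  using assms integrable_distr_eq[OF measurable_fading_fst[of H], of f]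
  by (simp add: distr_fading_fst)

lemma AE_fading_fst:
  assumes "AE x in H. P x" "{x \<in> space H. P x} \<in> sets H"
  shows "AE \<nu> in fading H. P (fst \<nu>)"
  using AE_distr_iff[OF measurable_fading_fst assms(2)] assms(1)
  unfolding distr_fading_fst by simp

lemma
  assumes H: "prob_space H" "sets H = sets borel" and adm: "admissible H Pmax P \<rho>"
  shows integrable_policy_power: "integrable (fading H) P"
    and integrable_policy_energy: "integrable (fading H) (\<lambda>\<nu>. QNL a b Ps T \<nu> (P \<nu>) (\<rho> \<nu>))"
proof -
  interpret prob_space "fading H"
    unfolding fading_def by (rule prob_space_pair[OF H(1) prob_space_unit_uniform])
  have [measurable]: "P \<in> borel_measurable (borel \<Otimes>\<^sub>M borel)" "\<rho> \<in> borel_measurable (borel \<Otimes>\<^sub>M borel)"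
    using adm measurable_fading_iff[OF H(2)] unfolding admissible_def by auto
  show "integrable (fading H) P"
    by (rule integrable_const_bound[where B = Pmax])
       (use adm in \<open>auto simp: admissible_def\<close>)
  show "integrable (fading H) (\<lambda>\<nu>. QNL a b Ps T \<nu> (P \<nu>) (\<rho> \<nu>))"
  proof (rule integrable_const_bound[where B = "\<bar>Ps * T\<bar> / (1 - Omega a b)"])
    show "AE \<nu> in fading H. norm (QNL a b Ps T \<nu> (P \<nu>) (\<rho> \<nu>)) \<le> \<bar>Ps * T\<bar> / (1 - Omega a b)"
      using abs_QNL_le by simp
    show "(\<lambda>\<nu>. QNL a b Ps T \<nu> (P \<nu>) (\<rho> \<nu>)) \<in> borel_measurable (fading H)"
      unfolding measurable_fading_iff[OF H(2)] QNL_def Psi_def by measurable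
  qed
qed

lemma integrable_policy_rate:
  assumes H: "sets H = sets borel" "AE x in H. 0 < x" "integrable H (\<lambda>x. x)"
    and "0 < \<sigma>2" and adm: "admissible H Pmax P \<rho>"
  shows "integrable (fading H) (\<lambda>\<nu>. rate \<sigma>2 \<nu> (P \<nu>) (\<rho> \<nu>))"
proof (rule Bochner_Integration.integrable_bound)
  have [measurable]: "P \<in> borel_measurable (borel \<Otimes>\<^sub>M borel)" "\<rho> \<in> borel_measurable (borel \<Otimes>\<^sub>M borel)"
    using adm measurable_fading_iff[OF H(1)] unfolding admissible_def by auto
  show "integrable (fading H) (\<lambda>\<nu>. fst \<nu> * Pmax / \<sigma>2)"
    using integrable_fading_fst[OF H(3)] by simp
  show "(\<lambda>\<nu>. rate \<sigma>2 \<nu> (P \<nu>) (\<rho> \<nu>)) \<in> borel_measurable (fading H)"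
    unfolding measurable_fading_iff[OF H(1)] rate_def by measurable
  have "{x \<in> space H. 0 < x} \<in> sets H"
    unfolding H(1) sets_eq_imp_space_eq[OF H(1)] by measurable
  then have "AE \<nu> in fading H. 0 < fst \<nu>"
    using H(2) by (rule AE_fading_fst[rotated])
  then show "AE \<nu> in fading H. norm (rate \<sigma>2 \<nu> (P \<nu>) (\<rho> \<nu>)) \<le> norm (fst \<nu> * Pmax / \<sigma>2)"
  proof (rule eventually_mono)
    fix \<nu> :: "real \<times> real"
    assume "0 < fst \<nu>"
    moreover have "0 \<le> P \<nu>" "P \<nu> \<le> Pmax" "0 \<le> \<rho> \<nu>" "\<rho> \<nu> \<le> 1"
      using adm unfolding admissible_def by blast+
    ultimately show "norm (rate \<sigma>2 \<nu> (P \<nu>) (\<rho> \<nu>)) \<le> norm (fst \<nu> * Pmax / \<sigma>2)"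
      using \<open>0 < \<sigma>2\<close> abs_rate_le[of \<nu> \<sigma>2 "P \<nu>" Pmax "\<rho> \<nu>"] by simp
  qed
qed

lemma admissible_time_share:
  assumes H: "sets H = sets borel"
    and adm1: "admissible H Pmax P1 \<rho>1" and adm2: "admissible H Pmax P2 \<rho>2"
  shows "admissible H Pmax (time_share \<theta> P1 P2) (time_share \<theta> \<rho>1 \<rho>2)"
  using assms unfolding admissible_def measurable_fading_iff[OF H]
  by (auto simp: time_share_def simp del: split_paired_All)

lemma
  assumes \<theta>: "0 < \<theta>" "\<theta> < 1" and H: "prob_space H" "sets H = sets borel"
    and adm1: "admissible H Pmax P1 \<rho>1" and adm2: "admissible H Pmax P2 \<rho>2"
  shows avg_power_time_share: "avg_power H (time_share \<theta> P1 P2)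
      = \<theta> * avg_power H P1 + (1 - \<theta>) * avg_power H P2"
    and avg_energy_time_share: "avg_energy a b Ps T H (time_share \<theta> P1 P2) (time_share \<theta> \<rho>1 \<rho>2)
      = \<theta> * avg_energy a b Ps T H P1 \<rho>1 + (1 - \<theta>) * avg_energy a b Ps T H P2 \<rho>2"
  using integral_time_share[OF \<theta> H(2)] adm1 adm2
    integrable_policy_power[OF H] integrable_policy_energy[OF H]
  by (simp_all add: avg_power_def avg_energy_def QNL_time_share)

lemma avg_rate_time_share:
  assumes \<theta>: "0 < \<theta>" "\<theta> < 1"
    and H: "sets H = sets borel" "AE x in H. 0 < x" "integrable H (\<lambda>x. x)" and "0 < \<sigma>2"
    and adm1: "admissible H Pmax P1 \<rho>1" and adm2: "admissible H Pmax P2 \<rho>2"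
  shows "avg_rate \<sigma>2 H (time_share \<theta> P1 P2) (time_share \<theta> \<rho>1 \<rho>2)
      = \<theta> * avg_rate \<sigma>2 H P1 \<rho>1 + (1 - \<theta>) * avg_rate \<sigma>2 H P2 \<rho>2"
  using integral_time_share[OF \<theta> H(1)] adm1 adm2 integrable_policy_rate[OF H \<open>0 < \<sigma>2\<close>]
  by (simp add: avg_rate_def rate_time_share)

theorem lemma4:
  fixes a b Ps T sigma2 Pmax :: real and H :: "real measure"
    and Qx Px Qy Py theta :: real
    and Psx rhosx Psy rhosy :: "real \<times> real \<Rightarrow> real"
  assumes "a > 0" "b > 0" "Ps > 0" "T > 0" "sigma2 > 0" "Pmax > 0"
    and "prob_space H" "sets H = sets borel"
    and "AE x in H. 0 < x" "integrable H (\<lambda>x. x)"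
    and "optimalP2 a b Ps T sigma2 H Pmax Qx Px Psx rhosx"
    and "optimalP2 a b Ps T sigma2 H Pmax Qy Py Psy rhosy"
    and "0 \<le> theta" "theta \<le> 1"
  shows "\<exists>Pz rhoz. admissible H Pmax Pz rhoz \<and>
     avg_energy a b Ps T H Pz rhoz \<ge> theta * Qx + (1 - theta) * Qy \<and>
     avg_power H Pz \<le> theta * Px + (1 - theta) * Py \<and>
     avg_rate sigma2 H Pz rhoz \<ge>
       theta * avg_rate sigma2 H Psx rhosx + (1 - theta) * avg_rate sigma2 H Psy rhosy"
proof -
  have x: "admissible H Pmax Psx rhosx" "Qx \<le> avg_energy a b Ps T H Psx rhosx" "avg_power H Psx \<le> Px"
    using assms(11) unfolding optimalP2_def feasibleP2_def by auto
  have y: "admissible H Pmax Psy rhosy" "Qy \<le> avg_energy a b Ps T H Psy rhosy" "avg_power H Psy \<le> Py"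
    using assms(12) unfolding optimalP2_def feasibleP2_def by auto
  consider "theta = 0" | "theta = 1" | "0 < theta" "theta < 1"
    using assms(13,14) by linarith
  then show ?thesis
  proof cases
    case 1
    with y show ?thesis by auto
  next
    case 2
    with x show ?thesis by auto
  next
    case 3
    note averages = avg_power_time_share[OF 3 assms(7,8) x(1) y(1)]
      avg_energy_time_share[OF 3 assms(7,8) x(1) y(1)]
      avg_rate_time_share[OF 3 assms(8-10,5) x(1) y(1)]
    have "theta * Qx + (1 - theta) * Qy
        \<le> theta * avg_energy a b Ps T H Psx rhosx + (1 - theta) * avg_energy a b Ps T H Psy rhosy"
      using 3 x(2) y(2) by (intro add_mono mult_left_mono) auto
    moreover have "theta * avg_power H Psx + (1 - theta) * avg_power H Psy \<le> theta * Px + (1 - theta) * Py"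
      using 3 x(3) y(3) by (intro add_mono mult_left_mono) auto
    ultimately show ?thesis
      using admissible_time_share[OF assms(8) x(1) y(1)] averages
      by (intro exI[of _ "time_share theta Psx Psy"] exI[of _ "time_share theta rhosx rhosy"]) simp
  qed
qed

end
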